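(* Let $d\ge2$ and $\mathcal A=\{e_1,\dots,e_d\}\subset\mathbb R^d$ be the standard basis (vertices of the probability simplex). Then $\mathrm{PWidth}(\mathcal A)$ equals the width of the simplex $\mathrm{conv}(\mathcal A)$ (the minimum over unit directions $u$ in the linear span of $\mathrm{conv}(\mathcal A)-\mathrm{conv}(\mathcal A)$ of $\max_{s,v\in\mathcal A}\langle u,s-v\rangle$), namely $2/\sqrt d$ if $d$ is even and $2/\sqrt{d-1/d}$ if $d$ is odd.
   Context: Euclidean norm and inner product. For a finite set $\mathcal B\subseteq\mathbb R^d$ and $x\in\mathrm{conv}(\mathcal B)$, $\mathcal S_x(\mathcal B)$ is the family of subsets $S\subseteq\mathcal B$ such that $x$ is a proper convex combination of all elements of $S$ (all coefficients positive). For $r\ne0$, $\mathrm{PdirW}(\mathcal B,r,x):=\min_{S\in\mathcal S_x(\mathcal B)}\max_{s\in\mathcal B,\,v\in S}\langle r/\|r\|,s-v\rangle$. The pyramidal width is $\mathrm{PWidth}(\mathcal A):=\inf\{\mathrm{PdirW}(\mathcal K\cap\mathcal A,r,x)\}$ over all nonempty faces $\mathcal K$ of $\mathrm{conv}(\mathcal A)$ (including $\mathrm{conv}(\mathcal A)$ itself), all $x\in\mathcal K$, and all $r\in\mathrm{cone}(\mathcal K-x)\setminus\{0\}$, where $\mathrm{cone}(\mathcal K-x)=\{\sum_i\lambda_i(y_i-x):\lambda_i\ge0,\ y_i\in\mathcal K\}$. *)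

theory Defs
  imports "HOL-Analysis.Analysis"
begin

definition proper_supports :: "'a::real_vector set \<Rightarrow> 'a \<Rightarrow> 'a set set" where
  "proper_supports B x = {S. S \<subseteq> B \<and> S \<noteq> {} \<and>
     (\<exists>c. (\<forall>v\<in>S. c v > 0) \<and> sum c S = 1 \<and> (\<Sum>v\<in>S. c v *\<^sub>R v) = x)}"

definition PdirW :: "'a::real_inner set \<Rightarrow> 'a \<Rightarrow> 'a \<Rightarrow> real" where
  "PdirW B r x = Min ((\<lambda>S. Max {inner (r /\<^sub>R norm r) (s - v) | s v. s \<in> B \<and> v \<in> S})
                     ` proper_supports B x)"

definition nonneg_cone :: "'a::real_vector set \<Rightarrow> 'a set" where
  "nonneg_cone S = {y. \<exists>F c. finite F \<and> F \<subseteq> S \<and> (\<forall>v\<in>F. c v \<ge> 0) \<and>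
                        y = (\<Sum>v\<in>F. c v *\<^sub>R v)}"

definition PWidth :: "'a::real_inner set \<Rightarrow> real" where
  "PWidth A = Inf {PdirW (K \<inter> A) r x | K x r.
      K face_of convex hull A \<and> K \<noteq> {} \<and> x \<in> K \<and>
      r \<in> nonneg_cone ((\<lambda>y. y - x) ` K) \<and> r \<noteq> 0}"

definition simplex_width :: "'a::real_inner set \<Rightarrow> real" where
  "simplex_width A = Inf {Max {inner u (s - v) | s v. s \<in> A \<and> v \<in> A} | u.
      u \<in> span {a - b | a b. a \<in> convex hull A \<and> b \<in> convex hull A} \<and> norm u = 1}"

end

theory Submission
  imports Defs
begin

(*
  Both widths are governed by directions u with coordinate sum 0: differences of points of the
  simplex, and hence every cone(K - x), lie in that hyperplane. For such u with largest and
  smallest coordinates M and m,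
    sum_{i,j} (u_i - u_j)^2 = 2 d |u|^2,    (u_i - u_j)^2 <= (M - m) |u_i - u_j|,
    sum_{i,j} |u_i - u_j| <= (M - m) (d^2 - d mod 2) / 2,
  the last by removing the two extreme coordinates and inducting. So M - m >= w |u| with
  w = sqrt (4 d / (d^2 - d mod 2)), and M - m = <u, e_p - e_q> for extreme coordinates p, q.

  For the pyramidal width take r in cone(K - x), K a face containing x. At a coordinate q where
  r is minimal, r_q < 0; this forces x_q > 0 (points of K are nonnegative), so e_q lies in every
  proper support of x. At a coordinate p where r is maximal, r_p > 0; this forces e_p into K,
  since otherwise K, and with it r, lies in {z. z_p = 0}. So the pair (e_p, e_q) is always
  admissible, and both widths are at least w. Equality holds for the centred indicator vector
  of floor(d/2) coordinates, attached at the barycenter.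
*)

lemma finite_obtain_arg_min:
  fixes f :: "'a \<Rightarrow> 'b::linorder"
  assumes "finite S" "S \<noteq> {}"
  obtains q where "q \<in> S" "\<And>i. i \<in> S \<Longrightarrow> f q \<le> f i"
proof -
  have "Min (f ` S) \<in> f ` S" using assms by simp
  then obtain q where q: "q \<in> S" "f q = Min (f ` S)" by auto
  show thesis
    by (rule that[OF q(1)]) (use assms in \<open>auto simp: q(2)\<close>)
qed

lemma finite_obtain_arg_max:
  fixes f :: "'a \<Rightarrow> 'b::linorder"
  assumes "finite S" "S \<noteq> {}"
  obtains p where "p \<in> S" "\<And>i. i \<in> S \<Longrightarrow> f i \<le> f p"
proof -
  have "Max (f ` S) \<in> f ` S" using assms by simp
  then obtain p where p: "p \<in> S" "f p = Max (f ` S)" by auto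
  show thesis
    by (rule that[OF p(1)]) (use assms in \<open>auto simp: p(2)\<close>)
qed

lemma sum_pairwise_abs_diff_remove_extremes:
  fixes f :: "'a \<Rightarrow> real"
  assumes I: "finite I" "p \<in> I" "q \<in> I" "p \<noteq> q"
    and bounds: "\<And>i. i \<in> I \<Longrightarrow> f q \<le> f i \<and> f i \<le> f p"
  shows "(\<Sum>i\<in>I. \<Sum>j\<in>I. \<bar>f i - f j\<bar>)
       = 2 * (real (card I) - 1) * (f p - f q) + (\<Sum>i\<in>I - {p,q}. \<Sum>j\<in>I - {p,q}. \<bar>f i - f j\<bar>)"
proof -
  define J where "J = I - {p, q}"
  have IJ: "I = insert p (insert q J)" "p \<notin> J" "q \<notin> J" "finite J"
    using I by (auto simp: J_def)
  have split: "(\<Sum>i\<in>I. h i) = h p + h q + (\<Sum>i\<in>J. h i)" for h :: "'a \<Rightarrow> real"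
    unfolding IJ(1) using IJ(2-4) I(4) by (simp add: add.assoc)
  have "\<bar>f p - f j\<bar> + \<bar>f q - f j\<bar> = f p - f q" "\<bar>f j - f p\<bar> + \<bar>f j - f q\<bar> = f p - f q"
    if "j \<in> J" for j
    using bounds[of j] that IJ(1) by auto
  then have to_p_q: "(\<Sum>j\<in>J. \<bar>f p - f j\<bar>) + (\<Sum>j\<in>J. \<bar>f q - f j\<bar>) = real (card J) * (f p - f q)"
    and from_p_q: "(\<Sum>j\<in>J. \<bar>f j - f p\<bar>) + (\<Sum>j\<in>J. \<bar>f j - f q\<bar>) = real (card J) * (f p - f q)"
    by (simp_all flip: sum.distrib)
  have "f q \<le> f p" using bounds I(2) by blast
  then have "(\<Sum>i\<in>I. \<Sum>j\<in>I. \<bar>f i - f j\<bar>)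
      = 2 * (f p - f q) + ((\<Sum>j\<in>J. \<bar>f p - f j\<bar>) + (\<Sum>j\<in>J. \<bar>f q - f j\<bar>))
        + ((\<Sum>j\<in>J. \<bar>f j - f p\<bar>) + (\<Sum>j\<in>J. \<bar>f j - f q\<bar>)) + (\<Sum>i\<in>J. \<Sum>j\<in>J. \<bar>f i - f j\<bar>)"
    by (simp add: split sum.distrib)
  also have "\<dots> = 2 * (real (card J) + 1) * (f p - f q) + (\<Sum>i\<in>J. \<Sum>j\<in>J. \<bar>f i - f j\<bar>)"
    unfolding to_p_q from_p_q by (simp add: algebra_simps)
  also have "real (card J) + 1 = real (card I) - 1"
    using IJ I(4) by simp
  finally show ?thesis unfolding J_def .
qed

lemma sum_pairwise_abs_diff_le:
  fixes f :: "'a \<Rightarrow> real"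
  assumes "finite I" and "\<And>i. i \<in> I \<Longrightarrow> m \<le> f i \<and> f i \<le> M"
  shows "2 * (\<Sum>i\<in>I. \<Sum>j\<in>I. \<bar>f i - f j\<bar>) \<le> (M - m) * (real (card I)^2 - real (card I mod 2))"
  using assms
proof (induction "card I" arbitrary: I rule: less_induct)
  case less
  show ?case
  proof (cases "card I < 2")
    case True
    then have "card I = 0 \<or> card I = 1" by linarith
    then consider "I = {}" | a where "I = {a}"
      using less.prems(1) card_1_singletonE by auto
    then show ?thesis by cases simp_all
  next
    case False
    then have "I \<noteq> {}" by auto
    then obtain q where q: "q \<in> I" "\<And>i. i \<in> I \<Longrightarrow> f q \<le> f i"
      using finite_obtain_arg_min[OF less.prems(1), of f] by blast
    have "I - {q} \<noteq> {}"
    proof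
      assume "I - {q} = {}"
      then have "card I \<le> card {q}" by (intro card_mono) auto
      with False show False by simp
    qed
    then obtain p where p: "p \<in> I - {q}" "\<And>i. i \<in> I - {q} \<Longrightarrow> f i \<le> f p"
      using finite_obtain_arg_max[of "I - {q}" f] less.prems(1) by blast
    have bounds: "f q \<le> f i \<and> f i \<le> f p" if "i \<in> I" for i
      using p q that by (cases "i = q") auto
    define J where "J = I - {p, q}"
    have cardJ: "card I = card J + 2"
      using p q less.prems(1) False by (auto simp: J_def card_Diff_subset)
    have IH: "2 * (\<Sum>i\<in>J. \<Sum>j\<in>J. \<bar>f i - f j\<bar>) \<le> (M - m) * (real (card J)^2 - real (card J mod 2))"
    proof (rule less.hyps)
      show "card J < card I" using cardJ by simp
      show "finite J" using less.prems(1) by (simp add: J_def)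
      show "m \<le> f i \<and> f i \<le> M" if "i \<in> J" for i using less.prems(2) that by (simp add: J_def)
    qed
    have peel: "(\<Sum>i\<in>I. \<Sum>j\<in>I. \<bar>f i - f j\<bar>)
        = 2 * (real (card I) - 1) * (f p - f q) + (\<Sum>i\<in>J. \<Sum>j\<in>J. \<bar>f i - f j\<bar>)"
      unfolding J_def using p q bounds less.prems(1)
      by (intro sum_pairwise_abs_diff_remove_extremes) auto
    have "f p - f q \<le> M - m" using less.prems(2)[of p] less.prems(2)[of q] p(1) q(1) by auto
    then have "(f p - f q) * (4 * (real (card I) - 1)) \<le> (M - m) * (4 * (real (card I) - 1))"
      using False by (intro mult_right_mono) auto
    moreover have "2 * (2 * (real (card I) - 1) * (f p - f q)) = (f p - f q) * (4 * (real (card I) - 1))"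
      by (simp add: algebra_simps)
    moreover have "(M - m) * (real (card I)^2 - real (card I mod 2))
        = (M - m) * (real (card J)^2 - real (card J mod 2)) + (M - m) * (4 * (real (card I) - 1))"
      using cardJ by (simp add: power2_eq_square algebra_simps)
    ultimately show ?thesis using peel IH by linarith
  qed
qed

lemma obtain_extreme_coords:
  fixes r :: "real^'n"
  obtains q p where "\<And>i. r$q \<le> r$i" "\<And>i. r$i \<le> r$p"
proof -
  obtain q where "\<And>i. r$q \<le> r$i"
    using finite_obtain_arg_min[OF finite_class.finite_UNIV UNIV_not_empty, of "\<lambda>i. r$i"]
    by (metis UNIV_I)
  moreover obtain p where "\<And>i. r$i \<le> r$p"
    using finite_obtain_arg_max[OF finite_class.finite_UNIV UNIV_not_empty, of "\<lambda>i. r$i"]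
    by (metis UNIV_I)
  ultimately show thesis by (rule that)
qed

lemma zero_sum_min_neg:
  fixes r :: "real^'n"
  assumes "(\<Sum>i\<in>UNIV. r$i) = 0" and "r \<noteq> 0" and "\<And>i. r$q \<le> r$i"
  shows "r$q < 0"
proof (rule ccontr)
  assume "\<not> r$q < 0"
  then have "\<forall>i\<in>UNIV. 0 \<le> r$i" using assms(3) by (meson not_less order_trans)
  then have "\<forall>i. r$i = 0" using assms(1) sum_nonneg_eq_0_iff[of UNIV "\<lambda>i. r$i"] by simp
  with assms(2) show False by (simp add: vec_eq_iff)
qed

lemma sum_pairwise_sq_diff_zero_sum:
  fixes u :: "real^'n"
  assumes "(\<Sum>i\<in>UNIV. u$i) = 0"
  shows "(\<Sum>i\<in>UNIV. \<Sum>j\<in>UNIV. (u$i - u$j)^2) = 2 * real CARD('n) * (norm u)^2"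
proof -
  have norm_sq: "(norm u)^2 = (\<Sum>i\<in>UNIV. u$i * u$i)"
    by (simp add: power2_norm_eq_inner inner_vec_def)
  have "(\<Sum>i\<in>UNIV. \<Sum>j\<in>UNIV. (u$i - u$j)^2)
      = (\<Sum>i\<in>UNIV. \<Sum>j\<in>UNIV. u$i * u$i + u$j * u$j - 2 * u$i * u$j)"
    by (simp add: power2_eq_square algebra_simps)
  also have "\<dots> = (\<Sum>i\<in>UNIV. real CARD('n) * (u$i * u$i) + (norm u)^2 - 2 * u$i * (\<Sum>j\<in>UNIV. u$j))"
    by (simp add: norm_sq sum.distrib sum_subtractf sum_distrib_left)
  also have "\<dots> = 2 * real CARD('n) * (norm u)^2"
    by (simp add: assms norm_sq sum.distrib sum_distrib_left[symmetric])
  finally show ?thesis .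
qed

lemma zero_sum_spread_sq_ge:
  fixes u :: "real^'n"
  assumes "(\<Sum>i\<in>UNIV. u$i) = 0" and bounds: "\<And>i. m \<le> u$i \<and> u$i \<le> M"
  shows "4 * real CARD('n) * (norm u)^2 \<le> (M - m)^2 * (real CARD('n)^2 - real (CARD('n) mod 2))"
proof -
  have "(u$i - u$j)^2 \<le> (M - m) * \<bar>u$i - u$j\<bar>" for i j
  proof -
    have "\<bar>u$i - u$j\<bar> \<le> M - m" using bounds[of i] bounds[of j] by auto
    then have "\<bar>u$i - u$j\<bar> * \<bar>u$i - u$j\<bar> \<le> (M - m) * \<bar>u$i - u$j\<bar>"
      by (intro mult_right_mono) auto
    then show ?thesis by (simp add: power2_eq_square)
  qed
  then have "2 * real CARD('n) * (norm u)^2 \<le> (M - m) * (\<Sum>i\<in>UNIV. \<Sum>j\<in>UNIV. \<bar>u$i - u$j\<bar>)"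
    unfolding sum_pairwise_sq_diff_zero_sum[OF assms(1), symmetric] sum_distrib_left
    by (intro sum_mono)
  moreover have "2 * (\<Sum>i\<in>UNIV. \<Sum>j\<in>UNIV. \<bar>u$i - u$j\<bar>)
      \<le> (M - m) * (real CARD('n)^2 - real (CARD('n) mod 2))"
    using sum_pairwise_abs_diff_le[of "UNIV :: 'n set" m "\<lambda>i. u$i" M] bounds by simp
  moreover have "0 \<le> M - m" using bounds by (meson diff_ge_0_iff_ge order_trans)
  ultimately have "(M - m) * (2 * (\<Sum>i\<in>UNIV. \<Sum>j\<in>UNIV. \<bar>u$i - u$j\<bar>))
      \<le> (M - m) * ((M - m) * (real CARD('n)^2 - real (CARD('n) mod 2)))"
    by (intro mult_left_mono)
  with \<open>2 * real CARD('n) * (norm u)^2 \<le> _\<close> show ?thesis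
    by (simp add: power2_eq_square algebra_simps)
qed

definition std_simplex_width :: "nat \<Rightarrow> real" where
  "std_simplex_width d = sqrt (4 * real d / (real d ^ 2 - real (d mod 2)))"

lemma zero_sum_spread_ge:
  fixes u :: "real^'n"
  assumes "(\<Sum>i\<in>UNIV. u$i) = 0" and "\<And>i. m \<le> u$i \<and> u$i \<le> M"
  shows "std_simplex_width CARD('n) * norm u \<le> M - m"
proof -
  define dd where "dd = real CARD('n)^2 - real (CARD('n) mod 2)"
  have "0 \<le> M - m" using assms(2) by (meson diff_ge_0_iff_ge order_trans)
  moreover have "0 \<le> dd"
  proof -
    have "CARD('n) mod 2 \<le> 1" by presburger
    moreover have "1 \<le> real CARD('n)^2" by (simp add: Suc_leI)
    ultimately show ?thesis unfolding dd_def by linarith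
  qed
  ultimately have "4 * real CARD('n) * (norm u)^2 / dd \<le> (M - m)^2"
    using zero_sum_spread_sq_ge[OF assms] by (auto simp: dd_def divide_le_eq)
  then have "sqrt (4 * real CARD('n) * (norm u)^2 / dd) \<le> sqrt ((M - m)^2)"
    by (rule real_sqrt_le_mono)
  then show ?thesis
    using \<open>0 \<le> M - m\<close> by (simp add: std_simplex_width_def dd_def real_sqrt_mult real_sqrt_divide)
qed

lemma four_mul_half_floor_ceil:
  "4 * real (d div 2) * real (d - d div 2) = real d ^ 2 - real (d mod 2)"
proof (cases "even d")
  case True
  then obtain t where "d = 2 * t" by blast
  then show ?thesis by (simp add: power2_eq_square algebra_simps)
next
  case False
  then obtain t where t: "d = 2 * t + 1" by (rule oddE)
  then have "d div 2 = t" "d mod 2 = 1" by presburger+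
  with t show ?thesis by (simp add: power2_eq_square algebra_simps)
qed

lemma zero_sum_spread_attained:
  assumes "2 \<le> CARD('n)"
  obtains u :: "real^'n" where "(\<Sum>i\<in>UNIV. u$i) = 0" "norm u = 1"
    "\<forall>i j. u$i - u$j \<le> std_simplex_width CARD('n)"
proof -
  define d where "d = CARD('n)"
  define k where "k = d div 2"
  have k: "0 < k" "k < d" using assms by (auto simp: d_def k_def)
  obtain P :: "'n set" where P: "card P = k"
    using obtain_subset_with_card_n[of k "UNIV :: 'n set"] k by (auto simp: d_def)
  define r :: "real^'n" where "r = (\<chi> i. (if i \<in> P then 1 else 0) - real k / real d)"
  have sum_r: "(\<Sum>i\<in>UNIV. r$i) = 0"
    using P k by (simp add: r_def sum_subtractf d_def sum.If_cases)
  have "(norm r)^2 = (\<Sum>i\<in>UNIV. r$i * r$i)"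
    by (simp add: power2_norm_eq_inner inner_vec_def)
  also have "\<dots> = (\<Sum>i\<in>UNIV. if i \<in> P then (1 - real k / real d)^2 else (real k / real d)^2)"
    by (rule sum.cong) (auto simp: r_def power2_eq_square)
  also have "\<dots> = real k * (1 - real k / real d)^2 + real (d - k) * (real k / real d)^2"
    using P by (simp add: sum.If_cases Compl_eq_Diff_UNIV card_Diff_subset d_def)
  also have "\<dots> = real k * real (d - k) / real d"
    using k by (simp add: of_nat_diff field_simps power2_eq_square)
  finally have norm_r_sq: "(norm r)^2 = real k * real (d - k) / real d" .
  have "0 < 4 * real k * real (d - k)" using k by simp
  moreover have "real d ^ 2 - real (d mod 2) = 4 * real k * real (d - k)"
    using four_mul_half_floor_ceil[of d] by (simp add: k_def)
  ultimately have "0 \<le> std_simplex_width d"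
    and "(std_simplex_width d)^2 = 4 * real d / (4 * real k * real (d - k))"
    by (simp_all add: std_simplex_width_def)
  moreover from this(2) have "(std_simplex_width d * norm r)^2 = 1"
    using k by (simp add: power_mult_distrib norm_r_sq field_simps)
  ultimately have width_norm: "std_simplex_width d * norm r = 1"
    by (auto simp: power2_eq_1_iff) (smt (verit) mult_nonneg_nonneg norm_ge_zero)
  then have "r \<noteq> 0" by auto
  show thesis
  proof
    show "(\<Sum>i\<in>UNIV. (r /\<^sub>R norm r)$i) = 0"
      using sum_r by (simp add: sum_distrib_left[symmetric])
    show "norm (r /\<^sub>R norm r) = 1" using \<open>r \<noteq> 0\<close> by simp
    show "\<forall>i j. (r /\<^sub>R norm r)$i - (r /\<^sub>R norm r)$j \<le> std_simplex_width CARD('n)"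
    proof (intro allI)
      fix i j
      have "r$i - r$j \<le> std_simplex_width d * norm r" unfolding width_norm by (simp add: r_def)
      moreover have "(r /\<^sub>R norm r)$i - (r /\<^sub>R norm r)$j = (r$i - r$j) / norm r"
        by (simp add: divide_inverse_commute right_diff_distrib)
      ultimately show "(r /\<^sub>R norm r)$i - (r /\<^sub>R norm r)$j \<le> std_simplex_width CARD('n)"
        using \<open>r \<noteq> 0\<close> by (simp add: d_def pos_divide_le_eq)
    qed
  qed
qed

lemma std_simplex_width_closed_form:
  assumes "2 \<le> d"
  shows "std_simplex_width d = (if even d then 2 / sqrt (real d) else 2 / sqrt (real d - 1 / real d))"
proof (cases "even d")
  case True
  then have "std_simplex_width d = sqrt (4 / real d)"
    using assms by (simp add: std_simplex_width_def power2_eq_square)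
  then show ?thesis using True by (simp add: real_sqrt_divide)
next
  case False
  then have "d mod 2 = 1" by presburger
  moreover have "real d - 1 / real d = (real d ^ 2 - 1) / real d"
    using assms by (simp add: field_simps power2_eq_square)
  ultimately show ?thesis
    using False by (simp add: std_simplex_width_def real_sqrt_divide real_sqrt_mult)
qed

lemma nonneg_cone_subset_span: "nonneg_cone S \<subseteq> span S"
proof
  fix y assume "y \<in> nonneg_cone S"
  then obtain F c where F: "F \<subseteq> S" and y: "y = (\<Sum>v\<in>F. c v *\<^sub>R v)"
    unfolding nonneg_cone_def by blast
  have "c v *\<^sub>R v \<in> span S" if "v \<in> F" for v
    using that F by (intro span_scale span_base) blast
  then show "y \<in> span S" unfolding y by (rule span_sum)
qed

lemma nonneg_cone_component_nonneg:
  fixes r :: "real^'n"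
  assumes "r \<in> nonneg_cone S" and "\<And>v. v \<in> S \<Longrightarrow> 0 \<le> v$i"
  shows "0 \<le> r$i"
proof -
  obtain F c where F: "F \<subseteq> S" "\<forall>v\<in>F. 0 \<le> c v" and r: "r = (\<Sum>v\<in>F. c v *\<^sub>R v)"
    using assms(1) unfolding nonneg_cone_def by blast
  have "0 \<le> (\<Sum>v\<in>F. c v * v$i)"
    using F assms(2) by (intro sum_nonneg mult_nonneg_nonneg) auto
  then show ?thesis unfolding r by simp
qed

lemma finite_proper_supports: "finite B \<Longrightarrow> finite (proper_supports B x)"
  by (rule finite_subset[of _ "Pow B"]) (auto simp: proper_supports_def)

lemma proper_supports_nonempty:
  assumes "finite B" and "x \<in> convex hull B"
  shows "proper_supports B x \<noteq> {}"
proof -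
  obtain c where c: "\<forall>v\<in>B. 0 \<le> c v" "sum c B = 1" "(\<Sum>v\<in>B. c v *\<^sub>R v) = x"
    using assms by (auto simp: convex_hull_finite)
  define S where "S = {v\<in>B. 0 < c v}"
  have S: "S \<subseteq> B" "\<forall>v\<in>S. 0 < c v" by (auto simp: S_def)
  have "\<forall>v\<in>B - S. c v = 0" using c(1) by (auto simp: S_def)
  then have eq: "sum c S = sum c B" "(\<Sum>v\<in>S. c v *\<^sub>R v) = (\<Sum>v\<in>B. c v *\<^sub>R v)"
    using assms(1) S(1) by (auto intro: sum.mono_neutral_left)
  then have "S \<noteq> {}" using c(2) by auto
  with S have "S \<in> proper_supports B x"
    using c eq unfolding proper_supports_def by auto
  then show ?thesis by blast
qed

lemma finite_inner_diffs:
  "finite B \<Longrightarrow> finite S \<Longrightarrow> finite {inner u (s - v) | s v. s \<in> B \<and> v \<in> S}"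
  using finite_image_set2[of "\<lambda>s. s \<in> B" "\<lambda>v. v \<in> S"] by simp

lemma PdirW_attained:
  assumes "finite B" and "x \<in> convex hull B"
  obtains S where "S \<in> proper_supports B x"
    "PdirW B r x = Max {inner (r /\<^sub>R norm r) (s - v) | s v. s \<in> B \<and> v \<in> S}"
proof -
  let ?f = "\<lambda>S. Max {inner (r /\<^sub>R norm r) (s - v) | s v. s \<in> B \<and> v \<in> S}"
  have "Min (?f ` proper_supports B x) \<in> ?f ` proper_supports B x"
    using assms by (intro Min_in finite_imageI finite_proper_supports) (auto dest: proper_supports_nonempty)
  then obtain S where "S \<in> proper_supports B x" "Min (?f ` proper_supports B x) = ?f S"
    by blast
  then show thesis using that unfolding PdirW_def by simp
qed

lemma PdirW_le:
  assumes "finite B" and "S \<in> proper_supports B x"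
  shows "PdirW B r x \<le> Max {inner (r /\<^sub>R norm r) (s - v) | s v. s \<in> B \<and> v \<in> S}"
  unfolding PdirW_def using assms by (intro Min_le finite_imageI finite_proper_supports) auto

lemma cInf_eq_if_attained:
  fixes z :: "'a::conditionally_complete_linorder"
  assumes "x \<in> X" "x \<le> z" "\<And>y. y \<in> X \<Longrightarrow> z \<le> y"
  shows "Inf X = z"
proof -
  have "x = z" using assms by (simp add: antisym)
  then show ?thesis using assms by (intro cInf_eq_minimum) auto
qed

abbreviation std_basis :: "(real^'n) set" where
  "std_basis \<equiv> range (\<lambda>i. axis i 1)"

abbreviation barycenter :: "real^'n" where
  "barycenter \<equiv> \<chi> i. 1 / real CARD('n)"

lemma inner_axis_diff: "inner u (axis i 1 - axis j 1) = u$i - u$j" for u :: "real^'n"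
  by (simp add: inner_diff_right inner_axis)

lemma convex_hull_std_basis:
  "convex hull std_basis = {y :: real^'n. (\<forall>j. 0 \<le> y$j) \<and> (\<Sum>j\<in>UNIV. y$j) = 1}"
proof
  show "convex hull std_basis \<subseteq> {y :: real^'n. (\<forall>j. 0 \<le> y$j) \<and> (\<Sum>j\<in>UNIV. y$j) = 1}"
    by (rule hull_minimal)
       (auto simp: convex_def axis_def sum.distrib sum_distrib_left[symmetric])
  show "{y :: real^'n. (\<forall>j. 0 \<le> y$j) \<and> (\<Sum>j\<in>UNIV. y$j) = 1} \<subseteq> convex hull std_basis"
  proof safe
    fix y :: "real^'n" assume "\<forall>j. 0 \<le> y$j" "(\<Sum>j\<in>UNIV. y$j) = 1"
    then have "(\<Sum>i\<in>UNIV. y$i *\<^sub>R axis i 1) \<in> convex hull std_basis"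
      by (intro convex_sum) (auto intro: hull_inc)
    moreover have "(\<Sum>i\<in>UNIV. y$i *\<^sub>R axis i 1) = y"
      by (simp add: vec_eq_iff axis_def if_distrib cong: if_cong)
    ultimately show "y \<in> convex hull std_basis" by simp
  qed
qed

lemma sum_coords_eq_zero_on_span_hull_diffs:
  fixes u :: "real^'n"
  assumes "u \<in> span {a - b | a b. a \<in> convex hull std_basis \<and> b \<in> convex hull std_basis}"
  shows "(\<Sum>j\<in>UNIV. u$j) = 0"
proof (rule linear_eq_0_on_span[OF _ _ assms])
  show "linear (\<lambda>u :: real^'n. \<Sum>j\<in>UNIV. u$j)"
    by (intro bounded_linear.linear bounded_linear_sum bounded_linear_vec_nth)
  show "(\<Sum>j\<in>UNIV. v$j) = 0"
    if "v \<in> {a - b | a b. a \<in> convex hull std_basis \<and> b \<in> convex hull std_basis}" for v :: "real^'n"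
    using that by (auto simp: convex_hull_std_basis sum_subtractf)
qed

lemma face_of_std_simplex_eq_hull:
  fixes K :: "(real^'n) set"
  assumes "K face_of convex hull std_basis"
  shows "K = convex hull (K \<inter> std_basis)"
proof
  have "compact (std_basis :: (real^'n) set)" by (simp add: finite_imp_compact)
  then obtain S where S: "S \<subseteq> std_basis" "K = convex hull S"
    by (rule face_of_convex_hull_subset[OF _ assms])
  have "S \<subseteq> K \<inter> std_basis" using S hull_subset[of S convex] by blast
  then show "K \<subseteq> convex hull (K \<inter> std_basis)" unfolding S(2) by (rule hull_mono)
  show "convex hull (K \<inter> std_basis) \<subseteq> K"
    using face_of_imp_convex[OF assms] by (intro hull_minimal) auto
qed

lemma face_of_std_simplex_component_zero:
  fixes K :: "(real^'n) set"
  assumes "K face_of convex hull std_basis" and "axis p 1 \<notin> K" and "z \<in> K"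
  shows "z$p = 0"
proof -
  have "K \<inter> std_basis \<subseteq> {y. y$p = 0}"
    using assms(2) by (auto simp: axis_def)
  moreover have "convex {y :: real^'n. y$p = 0}" by (simp add: convex_def)
  ultimately have "convex hull (K \<inter> std_basis) \<subseteq> {y. y$p = 0}" by (rule hull_minimal)
  then show ?thesis using assms(3) face_of_std_simplex_eq_hull[OF assms(1)] by blast
qed

lemma axis_mem_proper_support:
  fixes x :: "real^'n"
  assumes "S \<in> proper_supports B x" and "B \<subseteq> std_basis" and "x$q \<noteq> 0"
  shows "axis q 1 \<in> S"
proof (rule ccontr)
  assume q: "axis q 1 \<notin> S"
  obtain c where S: "S \<subseteq> B" "(\<Sum>v\<in>S. c v *\<^sub>R v) = x"
    using assms(1) unfolding proper_supports_def by blast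
  have "v$q = 0" if "v \<in> S" for v
    using that S(1) assms(2) q by (auto simp: axis_def)
  then have "x$q = 0" unfolding S(2)[symmetric] by simp
  with assms(3) show False by simp
qed

lemma zero_sum_scaled_diff_barycenter:
  fixes u :: "real^'n"
  assumes "(\<Sum>i\<in>UNIV. u$i) = 0"
  obtains c y where "0 \<le> c" "y \<in> convex hull std_basis" "u = c *\<^sub>R (y - barycenter)"
proof -
  define c where "c = real CARD('n) * (norm u + 1)"
  define y :: "real^'n" where "y = barycenter + u /\<^sub>R c"
  have c_pos: "0 < c" unfolding c_def by (intro mult_pos_pos add_nonneg_pos) simp_all
  have "0 < norm u + 1" by (metis norm_ge_zero add_nonneg_pos zero_less_one)
  then have scale: "(norm u + 1) / c = 1 / real CARD('n)" by (simp add: c_def)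
  have "0 \<le> y$j" for j
  proof -
    have "0 \<le> norm u + 1 + u$j" using component_le_norm_cart[of u j] by linarith
    then have "0 \<le> (norm u + 1 + u$j) / c" using c_pos by simp
    also have "\<dots> = (norm u + 1) / c + u$j / c" by (rule add_divide_distrib)
    also have "\<dots> = y$j" unfolding scale by (simp add: y_def divide_inverse_commute)
    finally show ?thesis .
  qed
  moreover have "(\<Sum>j\<in>UNIV. y$j) = 1"
  proof -
    have "(\<Sum>j\<in>UNIV. y$j) = (\<Sum>j\<in>(UNIV :: 'n set). 1 / real CARD('n)) + inverse c * (\<Sum>j\<in>UNIV. u$j)"
      by (simp add: y_def sum.distrib sum_distrib_left)
    then show ?thesis using assms by simp
  qed
  ultimately have "y \<in> convex hull std_basis" by (simp add: convex_hull_std_basis)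
  moreover have "u = c *\<^sub>R (y - barycenter)" using c_pos by (simp add: y_def)
  ultimately show thesis using c_pos by (intro that) auto
qed

lemma barycenter_in_proper_supports:
  "std_basis \<in> proper_supports std_basis (barycenter :: real^'n)"
proof -
  have inj: "inj (\<lambda>i. axis i (1::real) :: real^'n)" by (simp add: inj_def axis_eq_axis)
  have "(\<Sum>v\<in>std_basis. (1 / real CARD('n)) *\<^sub>R v) = (\<Sum>i\<in>UNIV. (1 / real CARD('n)) *\<^sub>R (axis i 1 :: real^'n))"
    by (subst sum.reindex[OF inj]) (simp add: o_def)
  also have "\<dots> = (barycenter :: real^'n)"
    by (simp add: vec_eq_iff axis_def if_distrib cong: if_cong)
  finally show ?thesis
    using inj unfolding proper_supports_def
    by (intro CollectI conjI exI[of _ "\<lambda>_. 1 / real CARD('n)"]) (auto simp: card_image)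
qed

lemma Max_inner_diff_std_basis_le:
  fixes u :: "real^'n"
  assumes "\<And>i j. u$i - u$j \<le> c"
  shows "Max {inner u (s - v) | s v. s \<in> std_basis \<and> v \<in> std_basis} \<le> c"
proof (rule Max.boundedI)
  show "finite {inner u (s - v) | s v. s \<in> std_basis \<and> v \<in> std_basis}"
    by (intro finite_inner_diffs) simp_all
  show "{inner u (s - v) | s v. s \<in> std_basis \<and> v \<in> std_basis} \<noteq> {}" by blast
  show "a \<le> c" if "a \<in> {inner u (s - v) | s v. s \<in> std_basis \<and> v \<in> std_basis}" for a
    using that assms by (auto simp: inner_axis_diff)
qed

lemma PdirW_std_simplex_ge:
  fixes K :: "(real^'n) set" and x r :: "real^'n"
  assumes K: "K face_of convex hull std_basis" and x: "x \<in> K"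
    and r: "r \<in> nonneg_cone ((\<lambda>y. y - x) ` K)" "r \<noteq> 0"
  shows "std_simplex_width CARD('n) \<le> PdirW (K \<inter> std_basis) r x"
proof -
  have K_sub: "K \<subseteq> convex hull std_basis" using K by (rule face_of_imp_subset)
  have r_span: "r \<in> span ((\<lambda>y. y - x) ` K)" using r(1) nonneg_cone_subset_span by blast
  have "(\<lambda>y. y - x) ` K \<subseteq> {a - b | a b. a \<in> convex hull std_basis \<and> b \<in> convex hull std_basis}"
    using K_sub x by blast
  then have sum_r: "(\<Sum>j\<in>UNIV. r$j) = 0"
    using r_span span_mono sum_coords_eq_zero_on_span_hull_diffs by blast
  obtain q p where q: "\<And>i. r$q \<le> r$i" and p: "\<And>i. r$i \<le> r$p"
    using obtain_extreme_coords[of r] by metis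
  have "r$q < 0" using sum_r r(2) q by (rule zero_sum_min_neg)
  have "(\<Sum>j\<in>UNIV. (-r)$j) = 0" using sum_r by (simp add: sum_negf)
  moreover have "-r \<noteq> 0" using r(2) by simp
  moreover have "(-r)$p \<le> (-r)$i" for i using p[of i] by simp
  ultimately have "(-r)$p < 0" by (rule zero_sum_min_neg)
  have "x$q \<noteq> 0"
  proof
    assume "x$q = 0"
    have "0 \<le> r$q"
      by (rule nonneg_cone_component_nonneg[OF r(1)])
         (use K_sub \<open>x$q = 0\<close> in \<open>auto simp: convex_hull_std_basis\<close>)
    with \<open>r$q < 0\<close> show False by simp
  qed
  have "axis p 1 \<in> K"
  proof (rule ccontr)
    assume "axis p 1 \<notin> K"
    then have "v$p = 0" if "v \<in> (\<lambda>y. y - x) ` K" for v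
      using that x face_of_std_simplex_component_zero[OF K] by auto
    then have "r$p = 0"
      using linear_eq_0_on_span[OF bounded_linear.linear[OF bounded_linear_vec_nth] _ r_span] by blast
    with \<open>(-r)$p < 0\<close> show False by simp
  qed
  have fin: "finite (K \<inter> std_basis)" by simp
  moreover have "x \<in> convex hull (K \<inter> std_basis)" using face_of_std_simplex_eq_hull[OF K] x by simp
  ultimately obtain S where S: "S \<in> proper_supports (K \<inter> std_basis) x"
      "PdirW (K \<inter> std_basis) r x = Max {inner (r /\<^sub>R norm r) (s - v) | s v. s \<in> K \<inter> std_basis \<and> v \<in> S}"
    by (rule PdirW_attained)
  have "axis q 1 \<in> S" using S(1) Int_lower2 \<open>x$q \<noteq> 0\<close> by (rule axis_mem_proper_support)
  have "finite S" using S(1) fin by (auto simp: proper_supports_def intro: finite_subset)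
  have "std_simplex_width CARD('n) * norm r \<le> r$p - r$q"
    using sum_r p q by (intro zero_sum_spread_ge) auto
  then have "std_simplex_width CARD('n) \<le> (r$p - r$q) / norm r"
    using r(2) by (simp add: pos_le_divide_eq)
  also have "\<dots> = inner (r /\<^sub>R norm r) (axis p 1 - axis q 1)"
    by (simp add: inner_axis_diff divide_inverse_commute right_diff_distrib)
  also have "\<dots> \<le> Max {inner (r /\<^sub>R norm r) (s - v) | s v. s \<in> K \<inter> std_basis \<and> v \<in> S}"
    using \<open>axis p 1 \<in> K\<close> \<open>axis q 1 \<in> S\<close> \<open>finite S\<close> by (intro Max_ge finite_inner_diffs) auto
  finally show ?thesis using S(2) by simp
qed

lemma simplex_width_std_simplex:
  assumes "2 \<le> CARD('n)"
  shows "simplex_width (std_basis :: (real^'n) set) = std_simplex_width CARD('n)"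
proof -
  let ?G = "{a - b | a b. a \<in> convex hull std_basis \<and> b \<in> convex hull (std_basis :: (real^'n) set)}"
  let ?M = "\<lambda>u :: real^'n. Max {inner u (s - v) | s v. s \<in> std_basis \<and> v \<in> std_basis}"
  obtain u :: "real^'n" where u: "(\<Sum>i\<in>UNIV. u$i) = 0" "norm u = 1"
      "\<forall>i j. u$i - u$j \<le> std_simplex_width CARD('n)"
    using assms by (rule zero_sum_spread_attained)
  obtain c y where "y \<in> convex hull std_basis" "u = c *\<^sub>R (y - barycenter)"
    using u(1) by (rule zero_sum_scaled_diff_barycenter)
  moreover have "barycenter \<in> convex hull (std_basis :: (real^'n) set)"
    by (simp add: convex_hull_std_basis)
  ultimately have "u \<in> span ?G" by (blast intro: span_scale span_base)
  have lower: "std_simplex_width CARD('n) \<le> ?M v" if "v \<in> span ?G" "norm v = 1" for v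
  proof -
    obtain q p where q: "\<And>i. v$q \<le> v$i" and p: "\<And>i. v$i \<le> v$p"
      using obtain_extreme_coords[of v] by metis
    have "std_simplex_width CARD('n) * norm v \<le> v$p - v$q"
      using sum_coords_eq_zero_on_span_hull_diffs[OF that(1)] p q by (intro zero_sum_spread_ge) auto
    also have "\<dots> = inner v (axis p 1 - axis q 1)" by (simp add: inner_axis_diff)
    also have "\<dots> \<le> ?M v" by (intro Max_ge finite_inner_diffs) auto
    finally show ?thesis using that(2) by simp
  qed
  show ?thesis unfolding simplex_width_def
    by (rule cInf_eq_if_attained[of "?M u"])
       (use \<open>u \<in> span ?G\<close> u Max_inner_diff_std_basis_le lower in auto)
qed

lemma PWidth_std_simplex:
  assumes "2 \<le> CARD('n)"
  shows "PWidth (std_basis :: (real^'n) set) = std_simplex_width CARD('n)"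
proof -
  let ?P = "{PdirW (K \<inter> std_basis) r x | K x r.
      K face_of convex hull std_basis \<and> K \<noteq> {} \<and> x \<in> K \<and>
      r \<in> nonneg_cone ((\<lambda>y. y - x) ` K) \<and> r \<noteq> (0 :: real^'n)}"
  obtain u :: "real^'n" where u: "(\<Sum>i\<in>UNIV. u$i) = 0" "norm u = 1"
      "\<forall>i j. u$i - u$j \<le> std_simplex_width CARD('n)"
    using assms by (rule zero_sum_spread_attained)
  obtain c y where c: "0 \<le> c" "y \<in> convex hull std_basis" "u = c *\<^sub>R (y - barycenter)"
    using u(1) by (rule zero_sum_scaled_diff_barycenter)
  have cone: "u \<in> nonneg_cone ((\<lambda>z. z - barycenter) ` (convex hull std_basis))"
    unfolding nonneg_cone_def using c
    by (intro CollectI exI[of _ "{y - barycenter}"] exI[of _ "\<lambda>_. c"]) auto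
  have bary: "barycenter \<in> convex hull (std_basis :: (real^'n) set)"
    by (simp add: convex_hull_std_basis)
  have "convex hull std_basis \<inter> std_basis = (std_basis :: (real^'n) set)"
    by (simp add: Int_absorb1 hull_subset)
  then have attained: "PdirW std_basis u barycenter \<in> ?P"
    using cone bary u(2) face_of_refl[OF convex_convex_hull]
    by (intro CollectI exI[of _ "convex hull std_basis"] exI[of _ barycenter] exI[of _ u]) auto
  have "PdirW std_basis u barycenter
      \<le> Max {inner (u /\<^sub>R norm u) (s - v) | s v. s \<in> std_basis \<and> v \<in> std_basis}"
    using barycenter_in_proper_supports by (intro PdirW_le) simp_all
  also have "\<dots> \<le> std_simplex_width CARD('n)"
    using u by (intro Max_inner_diff_std_basis_le) simp
  finally have "PdirW std_basis u barycenter \<le> std_simplex_width CARD('n)" .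
  moreover have "std_simplex_width CARD('n) \<le> z" if "z \<in> ?P" for z
  proof -
    from that obtain K and x r :: "real^'n"
      where "z = PdirW (K \<inter> std_basis) r x" "K face_of convex hull std_basis"
        "x \<in> K" "r \<in> nonneg_cone ((\<lambda>y. y - x) ` K)" "r \<noteq> 0"
      by blast
    then show ?thesis using PdirW_std_simplex_ge[of K x r] by simp
  qed
  ultimately show ?thesis unfolding PWidth_def by (intro cInf_eq_if_attained[OF attained])
qed

theorem mainTheorem6:
  fixes A :: "(real ^ 'n) set"
  assumes "CARD('n) \<ge> 2"
    and "A = range (\<lambda>i. axis i 1)"
  shows "PWidth A = simplex_width A \<and>
         simplex_width A = (if even CARD('n) then 2 / sqrt (real CARD('n))
                            else 2 / sqrt (real CARD('n) - 1 / real CARD('n)))"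
  using PWidth_std_simplex[OF assms(1)] simplex_width_std_simplex[OF assms(1)]
    std_simplex_width_closed_form[OF assms(1)] assms(2) by simp

end
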